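(* Let $\Phi:[a,b]\to\mathbb{R}$ be nowhere zero, fix $x_0\in[a,b]$ and $n\ge1$, and assume $\Phi$ and $f$ are such that all functions below are $n$ times differentiable in $x$. Then $D^{(n)}f(x)=\sum_{k=1}^n a_k(x)f^{(k)}(x)$ and $\widetilde D^{(n)}f(x)=\sum_{k=1}^n\widetilde a_k(x)f^{(k)}(x)$, where, for $1\le k\le n$, letting $1\le i_1<\dots<i_{n-1}\le n$ be the elements of $\{1,\dots,n\}\setminus\{k\}$, $\varepsilon=\varepsilon_{i_1,\dots,i_{n-1},k}$ the sign of the permutation $(i_1,\dots,i_{n-1},k)$ of $(1,\dots,n)$, $M(x)$ the $(n-1)\times(n-1)$ matrix with entries $M_{r,j}=\mathcal Y_j^{(i_r)}(x_0,x)$ and $\widetilde M(x)$ the one with entries $\widetilde M_{r,j}=\widetilde{\mathcal Y}_j^{(i_r)}(x_0,x)$ ($1\le r,j\le n-1$, superscripts denoting ordinary derivatives in $x$): $$a_k(x)=\begin{cases}\varepsilon\,\dfrac{[\Phi(x)]^{\frac{n+1}{2}}}{\alpha_{n-1}}\det\widetilde M(x), & n\text{ odd},\\[2ex] \varepsilon\,\dfrac{1}{\alpha_{n-1}[\Phi(x)]^{\frac n2}}\det M(x), & n\text{ even},\end{cases}\qquad \widetilde a_k(x)=\begin{cases}\varepsilon\,\dfrac{1}{\alpha_{n-1}[\Phi(x)]^{\frac{n+1}{2}}}\det M(x), & n\text{ odd},\\[2ex] \varepsilon\,\dfrac{[\Phi(x)]^{\frac n2}}{\alpha_{n-1}}\det\widetilde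 M(x), & n\text{ even},\end{cases}$$ with $\alpha_{n-1}=\prod_{j=0}^{n-1}j!$.
   Context: For $x_0,x\in[a,b]$ the $\Phi$-power functions are defined recursively by $X^{(0)}(x_0,x)\equiv 1$, $\widetilde X^{(0)}(x_0,x)\equiv 1$ and, for $n\ge 1$, $$X^{(n)}(x_0,x)=n\int_{x_0}^x X^{(n-1)}(x_0,\xi)\,\big(\Phi(\xi)\big)^{(-1)^n}\,d\xi,\qquad \widetilde X^{(n)}(x_0,x)=n\int_{x_0}^x \widetilde X^{(n-1)}(x_0,\xi)\,\Big(\frac{1}{\Phi(\xi)}\Big)^{(-1)^n}\,d\xi.$$ For $n\ge0$, $\mathcal Y_n=\widetilde X^{(n)}$ if $n$ is odd and $\mathcal Y_n=X^{(n)}$ if $n$ is even; $\widetilde{\mathcal Y}_n=X^{(n)}$ if $n$ is odd and $\widetilde{\mathcal Y}_n=\widetilde X^{(n)}$ if $n$ is even. The $\Phi$-derivatives are $Dh=\Phi\,h'$, $\widetilde Dh=\frac1\Phi h'$, with $D^{(0)}h=\widetilde D^{(0)}h=h$, $D^{(k)}h=D(\widetilde D^{(k-1)}h)$, $\widetilde D^{(k)}h=\widetilde D(D^{(k-1)}h)$ for $k\ge1$. In this part of the paper $\Phi$ is assumed real-valued. *)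

theory Defs
  imports "HOL-Analysis.Analysis" "HOL-Combinatorics.Permutations" "Jordan_Normal_Form.Determinant"
begin

definition dw :: "real \<Rightarrow> real \<Rightarrow> (real \<Rightarrow> real) \<Rightarrow> real \<Rightarrow> real" where
  "dw a b h x = vector_derivative h (at x within {a..b})"

definition dn :: "real \<Rightarrow> real \<Rightarrow> nat \<Rightarrow> (real \<Rightarrow> real) \<Rightarrow> real \<Rightarrow> real" where
  "dn a b k h = (dw a b ^^ k) h"

definition ndiff :: "real \<Rightarrow> real \<Rightarrow> nat \<Rightarrow> (real \<Rightarrow> real) \<Rightarrow> bool" where
  "ndiff a b m h \<longleftrightarrow> (\<forall>k<m. \<forall>x\<in>{a..b}. (dn a b k h) differentiable (at x within {a..b}))"

fun PhiD :: "real \<Rightarrow> real \<Rightarrow> (real \<Rightarrow> real) \<Rightarrow> nat \<Rightarrow> (real \<Rightarrow> real) \<Rightarrow> real \<Rightarrow> real"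
and PhiDt :: "real \<Rightarrow> real \<Rightarrow> (real \<Rightarrow> real) \<Rightarrow> nat \<Rightarrow> (real \<Rightarrow> real) \<Rightarrow> real \<Rightarrow> real" where
  "PhiD a b \<Phi> 0 h = h"
| "PhiD a b \<Phi> (Suc k) h = (\<lambda>x. \<Phi> x * dw a b (PhiDt a b \<Phi> k h) x)"
| "PhiDt a b \<Phi> 0 h = h"
| "PhiDt a b \<Phi> (Suc k) h = (\<lambda>x. (1 / \<Phi> x) * dw a b (PhiD a b \<Phi> k h) x)"

text \<open>(\<Phi> \<xi>)^((-1)^n) is written out as \<Phi> \<xi> for even n and 1/\<Phi> \<xi> for odd n;
  the oriented integral from x0 to x is the interval Lebesgue integral.\<close>
fun Xp :: "(real \<Rightarrow> real) \<Rightarrow> nat \<Rightarrow> real \<Rightarrow> real \<Rightarrow> real" where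
  "Xp \<Phi> 0 x0 x = 1"
| "Xp \<Phi> (Suc m) x0 x = real (Suc m) *
     (LBINT \<xi>=ereal x0..ereal x. Xp \<Phi> m x0 \<xi> * (if even (Suc m) then \<Phi> \<xi> else 1 / \<Phi> \<xi>))"

fun Xpt :: "(real \<Rightarrow> real) \<Rightarrow> nat \<Rightarrow> real \<Rightarrow> real \<Rightarrow> real" where
  "Xpt \<Phi> 0 x0 x = 1"
| "Xpt \<Phi> (Suc m) x0 x = real (Suc m) *
     (LBINT \<xi>=ereal x0..ereal x. Xpt \<Phi> m x0 \<xi> * (if even (Suc m) then 1 / \<Phi> \<xi> else \<Phi> \<xi>))"

definition Yp :: "(real \<Rightarrow> real) \<Rightarrow> nat \<Rightarrow> real \<Rightarrow> real \<Rightarrow> real" where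
  "Yp \<Phi> m = (if odd m then Xpt \<Phi> m else Xp \<Phi> m)"

definition Ypt :: "(real \<Rightarrow> real) \<Rightarrow> nat \<Rightarrow> real \<Rightarrow> real \<Rightarrow> real" where
  "Ypt \<Phi> m = (if odd m then Xp \<Phi> m else Xpt \<Phi> m)"

definition alpha :: "nat \<Rightarrow> real" where
  "alpha m = (\<Prod>j=0..m. fact j)"

text \<open>i_r: the r-th smallest element (1 \<le> r \<le> n-1) of {1..n} - {k}\<close>
definition idx :: "nat \<Rightarrow> nat \<Rightarrow> nat \<Rightarrow> nat" where
  "idx n k r = sorted_list_of_set ({1..n} - {k}) ! (r - 1)"

text \<open>the permutation (i_1,...,i_{n-1},k) of (1,...,n), as a map on nat (identity outside {1..n})\<close>
definition perm_ik :: "nat \<Rightarrow> nat \<Rightarrow> nat \<Rightarrow> nat" where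
  "perm_ik n k r = (if 1 \<le> r \<and> r < n then idx n k r else if r = n then k else r)"

definition eps :: "nat \<Rightarrow> nat \<Rightarrow> real" where
  "eps n k = real_of_int (sign (perm_ik n k))"

text \<open>M and \<widetilde>M, with 0-based JNF indices: entry (r,j) is the (r+1,j+1) entry of the paper\<close>
definition Mmat :: "real \<Rightarrow> real \<Rightarrow> (real \<Rightarrow> real) \<Rightarrow> nat \<Rightarrow> nat \<Rightarrow> real \<Rightarrow> real \<Rightarrow> real mat" where
  "Mmat a b \<Phi> n k x0 x = mat (n - 1) (n - 1)
     (\<lambda>(r, j). dn a b (idx n k (r + 1)) (Yp \<Phi> (j + 1) x0) x)"

definition Mtmat :: "real \<Rightarrow> real \<Rightarrow> (real \<Rightarrow> real) \<Rightarrow> nat \<Rightarrow> nat \<Rightarrow> real \<Rightarrow> real \<Rightarrow> real mat" where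
  "Mtmat a b \<Phi> n k x0 x = mat (n - 1) (n - 1)
     (\<lambda>(r, j). dn a b (idx n k (r + 1)) (Ypt \<Phi> (j + 1) x0) x)"

definition acoef :: "real \<Rightarrow> real \<Rightarrow> (real \<Rightarrow> real) \<Rightarrow> nat \<Rightarrow> nat \<Rightarrow> real \<Rightarrow> real \<Rightarrow> real" where
  "acoef a b \<Phi> n k x0 x =
     (if odd n then eps n k * (\<Phi> x ^ ((n + 1) div 2) / alpha (n - 1)) * Determinant.det (Mtmat a b \<Phi> n k x0 x)
      else eps n k * (1 / (alpha (n - 1) * \<Phi> x ^ (n div 2))) * Determinant.det (Mmat a b \<Phi> n k x0 x))"

definition atcoef :: "real \<Rightarrow> real \<Rightarrow> (real \<Rightarrow> real) \<Rightarrow> nat \<Rightarrow> nat \<Rightarrow> real \<Rightarrow> real \<Rightarrow> real" where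
  "atcoef a b \<Phi> n k x0 x =
     (if odd n then eps n k * (1 / (alpha (n - 1) * \<Phi> x ^ ((n + 1) div 2))) * Determinant.det (Mmat a b \<Phi> n k x0 x)
      else eps n k * (\<Phi> x ^ (n div 2) / alpha (n - 1)) * Determinant.det (Mtmat a b \<Phi> n k x0 x))"

end

theory Submission
  imports Defs
begin

(* Write W(Z, F) for the n x n matrix of the derivatives of orders 1, ..., n of the functions
   Z_1, ..., Z_(n-1), F. Expanding det W(Y, f) along its last column produces the sums of the
   theorem, so it suffices to compute det W(Y, f).
   If Z_(j+1)' = (j+1) g Z'_j with Z'_0 = 1 and F' = g G, the Leibniz rule factors the matrix of
   derivatives of orders 0, ..., n-1 of the functions (j+1) g Z'_j and g G into a lower triangular
   matrix with diagonal g and a matrix whose first column is (1, 0, ..., 0); hence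
   det W(Z, F) = (n-1)! g^n det W(Z', G). This applies to Z = Y, Z' = Ytilde, g = Phi. Replacing Phi
   by 1/Phi exchanges X with Xtilde and D with Dtilde, so it applies again to W(Ytilde, G) with
   g = 1/Phi, and after n alternating steps det W(Y, f) is alpha_(n-1) times a power of Phi times
   the derivative of D^(n-1) f or of Dtilde^(n-1) f. *)

lemma sorted_list_of_set_interval_remove:
  assumes "1 \<le> k" "k \<le> n"
  shows "sorted_list_of_set ({1..n} - {k}) = [1..<k] @ [Suc k..<Suc n]"
proof -
  have set: "{1..n} - {k} = set ([1..<k] @ [Suc k..<Suc n])" using assms by auto
  have "sorted ([1..<k] @ [Suc k..<Suc n])" "distinct ([1..<k] @ [Suc k..<Suc n])"
    by (auto simp: sorted_append)
  then show ?thesis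
    unfolding set sorted_list_of_set_sort_remdups by (simp add: distinct_remdups_id sorted_sort_id)
qed

lemma idx_Suc:
  assumes "1 \<le> k" "k \<le> n" "r < n - 1"
  shows "idx n k (Suc r) = (if r < k - 1 then Suc r else Suc (Suc r))"
  using assms unfolding idx_def sorted_list_of_set_interval_remove[OF assms(1,2)]
  by (auto simp: nth_append)

lemma perm_ik_self: "perm_ik n n = id"
proof
  fix r
  show "perm_ik n n r = id r"
    using idx_Suc[of n n "r - 1"] by (cases "1 \<le> r \<and> r < n") (auto simp: perm_ik_def)
qed

lemma perm_ik_Suc:
  assumes "1 \<le> k" "k \<le> n"
  shows "perm_ik (Suc n) k = perm_ik n k \<circ> Transposition.transpose n (Suc n)"
proof
  fix r
  consider "r = 0" | "1 \<le> r \<and> r < n" | "r = n" | "r > n" by linarith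
  then show "perm_ik (Suc n) k r = (perm_ik n k \<circ> Transposition.transpose n (Suc n)) r"
    using assms idx_Suc[of k n "r - 1"] idx_Suc[of k "Suc n" "r - 1"]
    by cases (auto simp: perm_ik_def)
qed

lemma eps_eq:
  assumes "1 \<le> k" "k \<le> n"
  shows "eps n k = (-1) ^ (n - k)"
proof -
  have "permutation (perm_ik n k) \<and> sign (perm_ik n k) = (-1) ^ (n - k)"
    using assms(2)
  proof (induction n rule: dec_induct)
    case base
    show ?case by (simp add: perm_ik_self)
  next
    case (step m)
    then show ?case
      unfolding perm_ik_Suc[OF assms(1) step(1)]
      by (simp add: permutation_compose permutation_swap_id sign_compose sign_swap_id Suc_diff_le
          del: comp_apply)
  qed
  then show ?thesis by (simp add: eps_def)
qed

lemma dn_0 [simp]: "dn a b 0 h = h"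
  by (simp add: dn_def)

lemma dn_Suc: "dn a b (Suc k) h = dn a b k (dw a b h)"
  by (simp only: dn_def funpow_Suc_right comp_apply)

lemma ndiff_0 [simp]: "ndiff a b 0 h"
  by (simp add: ndiff_def)

lemma ndiff_Suc:
  "ndiff a b (Suc k) h \<longleftrightarrow>
     (\<forall>x\<in>{a..b}. h differentiable (at x within {a..b})) \<and> ndiff a b k (dw a b h)"
  unfolding ndiff_def by (auto simp: dn_Suc less_Suc_eq_0_disj)

lemma ndiff_mono: "ndiff a b k h \<Longrightarrow> j \<le> k \<Longrightarrow> ndiff a b j h"
  unfolding ndiff_def by auto

lemma ndiff_differentiable:
  "ndiff a b (Suc k) h \<Longrightarrow> x \<in> {a..b} \<Longrightarrow> h differentiable (at x within {a..b})"
  by (simp add: ndiff_Suc)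

lemma ndiff_continuous_on: "ndiff a b (Suc k) h \<Longrightarrow> continuous_on {a..b} h"
  using ndiff_differentiable differentiable_imp_continuous_within continuous_on_eq_continuous_within
  by blast

lemma dw_cong: "\<forall>y\<in>{a..b}. g y = h y \<Longrightarrow> x \<in> {a..b} \<Longrightarrow> dw a b g x = dw a b h x"
  unfolding dw_def by (rule vector_derivative_cong_eq) (auto intro: always_eventually)

lemma dn_cong: "\<forall>y\<in>{a..b}. g y = h y \<Longrightarrow> x \<in> {a..b} \<Longrightarrow> dn a b k g x = dn a b k h x"
proof (induction k arbitrary: g h)
  case (Suc k)
  then have "\<forall>y\<in>{a..b}. dw a b g y = dw a b h y" using dw_cong by blast
  with Suc show ?case by (simp add: dn_Suc)
qed simp

lemma ndiff_cong: "\<forall>y\<in>{a..b}. g y = h y \<Longrightarrow> ndiff a b k g \<longleftrightarrow> ndiff a b k h"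
proof (induction k arbitrary: g h)
  case (Suc k)
  have "g differentiable (at x within {a..b}) \<longleftrightarrow> h differentiable (at x within {a..b})"
    if "x \<in> {a..b}" for x
    using differentiable_transform_within[of g x "{a..b}" 1 h]
      differentiable_transform_within[of h x "{a..b}" 1 g] that Suc.prems by auto
  moreover have "\<forall>y\<in>{a..b}. dw a b g y = dw a b h y" using Suc.prems dw_cong by blast
  ultimately show ?case using Suc.IH by (auto simp: ndiff_Suc)
qed simp

lemma dw_eqI:
  "a < b \<Longrightarrow> x \<in> {a..b} \<Longrightarrow> (h has_real_derivative d) (at x within {a..b}) \<Longrightarrow> dw a b h x = d"
  unfolding dw_def has_real_derivative_iff_has_vector_derivative
  by (rule vector_derivative_within_closed_interval)

lemma has_real_derivative_dw:
  "h differentiable (at x within {a..b}) \<Longrightarrow> (h has_real_derivative dw a b h x) (at x within {a..b})"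
  unfolding dw_def has_real_derivative_iff_has_vector_derivative
  by (simp add: vector_derivative_works)

lemma dw_const: "a < b \<Longrightarrow> x \<in> {a..b} \<Longrightarrow> dw a b (\<lambda>y. c) x = 0"
  by (intro dw_eqI DERIV_const)

lemma dw_add:
  assumes "a < b" "x \<in> {a..b}"
    and "g differentiable (at x within {a..b})" "h differentiable (at x within {a..b})"
  shows "dw a b (\<lambda>y. g y + h y) x = dw a b g x + dw a b h x"
  by (intro dw_eqI assms DERIV_add has_real_derivative_dw)

lemma dw_mult:
  assumes "a < b" "x \<in> {a..b}"
    and "g differentiable (at x within {a..b})" "h differentiable (at x within {a..b})"
  shows "dw a b (\<lambda>y. g y * h y) x = dw a b g x * h x + g x * dw a b h x"
  using DERIV_mult[OF has_real_derivative_dw[OF assms(3)] has_real_derivative_dw[OF assms(4)]]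
  by (intro dw_eqI assms) (simp add: mult.commute)

lemma dw_inverse:
  assumes "a < b" "x \<in> {a..b}" "g differentiable (at x within {a..b})" "g x \<noteq> 0"
  shows "dw a b (\<lambda>y. 1 / g y) x = - dw a b g x / g x ^ 2"
  using DERIV_inverse_fun[OF has_real_derivative_dw[OF assms(3)] assms(4)]
  by (intro dw_eqI assms) (simp add: inverse_eq_divide power2_eq_square)

lemma ndiff_const: "a < b \<Longrightarrow> ndiff a b k (\<lambda>y. c)"
proof (induction k arbitrary: c)
  case (Suc k)
  then have "ndiff a b k (dw a b (\<lambda>y. c))"
    using ndiff_cong[of a b "dw a b (\<lambda>y. c)" "\<lambda>y. 0"] dw_const by blast
  then show ?case by (simp add: ndiff_Suc)
qed simp

lemma ndiff_add:
  "a < b \<Longrightarrow> ndiff a b k g \<Longrightarrow> ndiff a b k h \<Longrightarrow> ndiff a b k (\<lambda>y. g y + h y)"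
proof (induction k arbitrary: g h)
  case (Suc k)
  then have "\<forall>y\<in>{a..b}. dw a b (\<lambda>y. g y + h y) y = dw a b g y + dw a b h y"
    using dw_add ndiff_differentiable by blast
  moreover have "ndiff a b k (\<lambda>y. dw a b g y + dw a b h y)"
    using Suc by (simp add: ndiff_Suc)
  ultimately show ?case
    using Suc.prems ndiff_cong by (fastforce simp: ndiff_Suc intro: differentiable_add)
qed simp

lemma ndiff_mult:
  "a < b \<Longrightarrow> ndiff a b k g \<Longrightarrow> ndiff a b k h \<Longrightarrow> ndiff a b k (\<lambda>y. g y * h y)"
proof (induction k arbitrary: g h)
  case (Suc k)
  then have "\<forall>y\<in>{a..b}. dw a b (\<lambda>y. g y * h y) y = dw a b g y * h y + g y * dw a b h y"
    using dw_mult ndiff_differentiable by blast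
  moreover have "ndiff a b k (\<lambda>y. dw a b g y * h y + g y * dw a b h y)"
    using Suc ndiff_mono[OF Suc.prems(2)] ndiff_mono[OF Suc.prems(3)]
    by (intro ndiff_add) (auto simp: ndiff_Suc)
  ultimately show ?case
    using Suc.prems ndiff_cong by (fastforce simp: ndiff_Suc intro: differentiable_mult)
qed simp

lemma ndiff_cmult: "a < b \<Longrightarrow> ndiff a b k h \<Longrightarrow> ndiff a b k (\<lambda>y. c * h y)"
  using ndiff_mult[OF _ ndiff_const] by blast

lemma ndiff_inverse:
  assumes "a < b" "\<forall>x\<in>{a..b}. g x \<noteq> 0"
  shows "ndiff a b k g \<Longrightarrow> ndiff a b k (\<lambda>y. 1 / g y)"
proof (induction k)
  case (Suc k)
  then have "\<forall>y\<in>{a..b}. dw a b (\<lambda>y. 1 / g y) y = - dw a b g y * ((1 / g y) * (1 / g y))"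
    using assms dw_inverse ndiff_differentiable by (simp add: power2_eq_square)
  moreover have "ndiff a b k (\<lambda>y. - dw a b g y * ((1 / g y) * (1 / g y)))"
    using Suc ndiff_mono[OF Suc.prems] ndiff_cmult[of a b k "dw a b g" "-1"] assms(1)
    by (intro ndiff_mult) (auto simp: ndiff_Suc)
  ultimately show ?case
    using Suc.prems assms ndiff_cong
    by (fastforce simp: ndiff_Suc intro: differentiable_divide)
qed simp

lemma dn_add:
  assumes "a < b" "x \<in> {a..b}"
  shows "ndiff a b k g \<Longrightarrow> ndiff a b k h \<Longrightarrow> dn a b k (\<lambda>y. g y + h y) x = dn a b k g x + dn a b k h x"
proof (induction k arbitrary: g h)
  case (Suc k)
  then have "\<forall>y\<in>{a..b}. dw a b (\<lambda>y. g y + h y) y = dw a b g y + dw a b h y"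
    using assms(1) dw_add ndiff_differentiable by blast
  then have "dn a b k (dw a b (\<lambda>y. g y + h y)) x = dn a b k (\<lambda>y. dw a b g y + dw a b h y) x"
    using assms(2) by (rule dn_cong)
  with Suc show ?case by (simp add: dn_Suc ndiff_Suc)
qed simp

lemma dn_cmult:
  assumes "a < b" "x \<in> {a..b}"
  shows "ndiff a b k h \<Longrightarrow> dn a b k (\<lambda>y. c * h y) x = c * dn a b k h x"
proof (induction k arbitrary: h)
  case (Suc k)
  then have "\<forall>y\<in>{a..b}. dw a b (\<lambda>y. c * h y) y = c * dw a b h y"
    using assms(1) dw_mult[of a b _ "\<lambda>y. c" h] dw_const ndiff_differentiable by simp
  then have "dn a b k (dw a b (\<lambda>y. c * h y)) x = dn a b k (\<lambda>y. c * dw a b h y) x"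
    using assms(2) by (rule dn_cong)
  with Suc show ?case by (simp add: dn_Suc ndiff_Suc)
qed simp

lemma dn_const: "a < b \<Longrightarrow> x \<in> {a..b} \<Longrightarrow> dn a b k (\<lambda>y. c) x = (if k = 0 then c else 0)"
proof (induction k arbitrary: c)
  case (Suc k)
  then have "dn a b k (dw a b (\<lambda>y. c)) x = dn a b k (\<lambda>y. 0) x"
    using dw_const by (intro dn_cong) auto
  with Suc show ?case by (simp add: dn_Suc)
qed simp

lemma binomial_convolution_Suc:
  fixes u v :: "nat \<Rightarrow> 'a::comm_semiring_1"
  shows "(\<Sum>l\<le>Suc k. of_nat (Suc k choose l) * u (Suc k - l) * v l) =
    (\<Sum>l\<le>k. of_nat (k choose l) * u (Suc (k - l)) * v l) +
    (\<Sum>l\<le>k. of_nat (k choose l) * u (k - l) * v (Suc l))"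
proof -
  have pascal: "of_nat (Suc k choose l) = (of_nat (k choose l) + (if l = 0 then 0 else of_nat (k choose (l - 1))) :: 'a)"
    for l by (cases l) (simp_all add: add.commute)
  have "(\<Sum>l\<le>Suc k. of_nat (Suc k choose l) * u (Suc k - l) * v l) =
      (\<Sum>l\<le>Suc k. of_nat (k choose l) * u (Suc k - l) * v l) +
      (\<Sum>l\<le>Suc k. (if l = 0 then 0 else of_nat (k choose (l - 1))) * u (Suc k - l) * v l)"
    unfolding sum.distrib[symmetric] distrib_right[symmetric] pascal by (rule sum.cong) simp_all
  also have "(\<Sum>l\<le>Suc k. of_nat (k choose l) * u (Suc k - l) * v l) =
      (\<Sum>l\<le>k. of_nat (k choose l) * u (Suc (k - l)) * v l)"
    by (simp add: Suc_diff_le binomial_eq_0)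
  also have "(\<Sum>l\<le>Suc k. (if l = 0 then 0 else of_nat (k choose (l - 1))) * u (Suc k - l) * v l) =
      (\<Sum>l\<le>k. of_nat (k choose l) * u (k - l) * v (Suc l))"
    by (subst sum.atMost_Suc_shift) simp
  finally show ?thesis .
qed

lemma dn_mult:
  assumes "a < b" "x \<in> {a..b}"
  shows "ndiff a b k g \<Longrightarrow> ndiff a b k h \<Longrightarrow>
    dn a b k (\<lambda>y. g y * h y) x = (\<Sum>l\<le>k. real (k choose l) * dn a b (k - l) g x * dn a b l h x)"
proof (induction k arbitrary: g h)
  case (Suc k)
  have g: "ndiff a b k g" "ndiff a b k (dw a b g)" and h: "ndiff a b k h" "ndiff a b k (dw a b h)"
    using Suc.prems ndiff_mono[of a b "Suc k"] by (auto simp: ndiff_Suc)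
  have "\<forall>y\<in>{a..b}. dw a b (\<lambda>y. g y * h y) y = dw a b g y * h y + g y * dw a b h y"
    using assms(1) Suc.prems dw_mult ndiff_differentiable by blast
  then have "dn a b (Suc k) (\<lambda>y. g y * h y) x = dn a b k (\<lambda>y. dw a b g y * h y + g y * dw a b h y) x"
    unfolding dn_Suc using assms(2) by (rule dn_cong)
  also have "\<dots> = dn a b k (\<lambda>y. dw a b g y * h y) x + dn a b k (\<lambda>y. g y * dw a b h y) x"
    using assms g h by (intro dn_add ndiff_mult)
  also have "\<dots> = (\<Sum>l\<le>k. real (k choose l) * dn a b (Suc (k - l)) g x * dn a b l h x) +
      (\<Sum>l\<le>k. real (k choose l) * dn a b (k - l) g x * dn a b (Suc l) h x)"
    using Suc.IH g h by (simp add: dn_Suc)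
  also have "\<dots> = (\<Sum>l\<le>Suc k. real (Suc k choose l) * dn a b (Suc k - l) g x * dn a b l h x)"
    by (rule binomial_convolution_Suc[symmetric])
  finally show ?case .
qed simp

lemma Xp_inverse: "Xp (\<lambda>x. 1 / \<Phi> x) m = Xpt \<Phi> m"
  by (induction m) (auto cong: if_cong)

lemma Xpt_inverse: "Xpt (\<lambda>x. 1 / \<Phi> x) m = Xp \<Phi> m"
  by (induction m) (auto cong: if_cong)

lemma Yp_inverse: "Yp (\<lambda>x. 1 / \<Phi> x) m = Ypt \<Phi> m"
  by (simp add: Yp_def Ypt_def Xp_inverse Xpt_inverse)

lemma Ypt_inverse: "Ypt (\<lambda>x. 1 / \<Phi> x) m = Yp \<Phi> m"
  by (simp add: Yp_def Ypt_def Xp_inverse Xpt_inverse)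

lemma Ypt_0 [simp]: "Ypt \<Phi> 0 x0 x = 1"
  by (simp add: Ypt_def)

lemma Yp_Suc: "Yp \<Phi> (Suc j) x0 x = real (Suc j) * (LBINT \<xi>=ereal x0..ereal x. Ypt \<Phi> j x0 \<xi> * \<Phi> \<xi>)"
  by (cases "even j") (auto simp: Yp_def Ypt_def)

lemma PhiD_inverse:
  "PhiD a b (\<lambda>x. 1 / \<Phi> x) k h = PhiDt a b \<Phi> k h \<and> PhiDt a b (\<lambda>x. 1 / \<Phi> x) k h = PhiD a b \<Phi> k h"
  by (induction k) simp_all

lemma PhiD_Suc_inverse: "PhiD a b \<Phi> (Suc k) h = (\<lambda>x. \<Phi> x * dw a b (PhiD a b (\<lambda>x. 1 / \<Phi> x) k h) x)"
  by (simp add: PhiD_inverse)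

lemma dw_Yp_Suc:
  assumes "a < b" "x0 \<in> {a..b}" "x \<in> {a..b}"
    and "continuous_on {a..b} (Ypt \<Phi> j x0)" "continuous_on {a..b} \<Phi>"
  shows "dw a b (Yp \<Phi> (Suc j) x0) x = \<Phi> x * (real (Suc j) * Ypt \<Phi> j x0 x)"
proof -
  have "((\<lambda>u. LBINT \<xi>=x0..u. Ypt \<Phi> j x0 \<xi> * \<Phi> \<xi>) has_vector_derivative Ypt \<Phi> j x0 x * \<Phi> x)
      (at x within {a..b})"
    using assms by (intro interval_integral_FTC2 continuous_intros) auto
  then have "(Yp \<Phi> (Suc j) x0 has_real_derivative real (Suc j) * (Ypt \<Phi> j x0 x * \<Phi> x))
      (at x within {a..b})"
    unfolding Yp_Suc[abs_def] has_real_derivative_iff_has_vector_derivative[symmetric]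
    by (rule DERIV_cmult)
  then show ?thesis
    using dw_eqI[OF assms(1,3)] by (simp add: ac_simps)
qed

lemma ndiff_PhiD:
  assumes "a < b" "\<forall>x\<in>{a..b}. \<Phi> x \<noteq> 0" "ndiff a b (k + m) \<Phi>" "ndiff a b (k + m) f"
  shows "ndiff a b m (PhiD a b \<Phi> k f)"
  using assms(2-4)
proof (induction k arbitrary: \<Phi> m)
  case (Suc k)
  have "ndiff a b (k + Suc m) (\<lambda>x. 1 / \<Phi> x)"
    using Suc.prems assms(1) by (intro ndiff_inverse) auto
  then have "ndiff a b (Suc m) (PhiD a b (\<lambda>x. 1 / \<Phi> x) k f)"
    using Suc.prems by (intro Suc.IH) auto
  moreover have "ndiff a b m \<Phi>"
    using Suc.prems(2) ndiff_mono by fastforce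
  ultimately show ?case
    unfolding PhiD_Suc_inverse using assms(1) by (intro ndiff_mult) (auto simp: ndiff_Suc)
qed simp

definition derivs_mat :: "real \<Rightarrow> real \<Rightarrow> nat \<Rightarrow> nat \<Rightarrow> (nat \<Rightarrow> real \<Rightarrow> real) \<Rightarrow> real \<Rightarrow> real mat" where
  "derivs_mat a b m s F x = mat m m (\<lambda>(r, j). dn a b (s + r) (F j) x)"

definition leibniz_mat :: "real \<Rightarrow> real \<Rightarrow> nat \<Rightarrow> (real \<Rightarrow> real) \<Rightarrow> real \<Rightarrow> real mat" where
  "leibniz_mat a b m g x = mat m m (\<lambda>(r, l). if l \<le> r then real (r choose l) * dn a b (r - l) g x else 0)"

definition with_last :: "nat \<Rightarrow> (nat \<Rightarrow> 'a) \<Rightarrow> 'a \<Rightarrow> nat \<Rightarrow> 'a" where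
  "with_last m Z F j = (if j < m - 1 then Z (Suc j) else F)"

lemma derivs_mat_carrier [simp]: "derivs_mat a b m s F x \<in> carrier_mat m m"
  by (simp add: derivs_mat_def)

lemma leibniz_mat_carrier [simp]: "leibniz_mat a b m g x \<in> carrier_mat m m"
  by (simp add: leibniz_mat_def)

lemma derivs_mat_Suc: "derivs_mat a b m (Suc s) F x = derivs_mat a b m s (\<lambda>j. dw a b (F j)) x"
  by (simp add: derivs_mat_def dn_Suc)

lemma derivs_mat_cong:
  assumes "x \<in> {a..b}" "\<forall>j<m. \<forall>y\<in>{a..b}. F j y = G j y"
  shows "derivs_mat a b m s F x = derivs_mat a b m s G x"
  using assms by (auto simp: derivs_mat_def intro!: eq_matI dn_cong)

lemma det_leibniz_mat: "det (leibniz_mat a b m g x) = g x ^ m"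
proof -
  have "det (leibniz_mat a b m g x) = prod_list (diag_mat (leibniz_mat a b m g x))"
    by (rule det_lower_triangular[of m]) (auto simp: leibniz_mat_def)
  also have "\<dots> = g x ^ m"
    by (simp add: prod_list_diag_prod leibniz_mat_def)
  finally show ?thesis .
qed

lemma derivs_mat_mult:
  assumes "a < b" "x \<in> {a..b}" "ndiff a b (m - 1) g" "\<forall>j<m. ndiff a b (m - 1) (H j)"
  shows "derivs_mat a b m 0 (\<lambda>j y. g y * H j y) x = leibniz_mat a b m g x * derivs_mat a b m 0 H x"
proof (rule eq_matI)
  fix r j assume "r < dim_row (leibniz_mat a b m g x * derivs_mat a b m 0 H x)"
    "j < dim_col (leibniz_mat a b m g x * derivs_mat a b m 0 H x)"
  then have r: "r < m" and j: "j < m" by (auto simp: leibniz_mat_def derivs_mat_def)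
  have "(leibniz_mat a b m g x * derivs_mat a b m 0 H x) $$ (r, j) =
      (\<Sum>l\<in>{0..<m} \<inter> {..r}. real (r choose l) * dn a b (r - l) g x * dn a b l (H j) x)"
    using r j by (simp add: leibniz_mat_def derivs_mat_def scalar_prod_def sum.inter_restrict if_distrib
        if_distribR cong: if_cong)
  also have "\<dots> = dn a b r (\<lambda>y. g y * H j y) x"
    using r j assms ndiff_mono[of a b "m - 1"] by (subst dn_mult) (auto intro!: sum.cong)
  finally show "derivs_mat a b m 0 (\<lambda>j y. g y * H j y) x $$ (r, j) =
      (leibniz_mat a b m g x * derivs_mat a b m 0 H x) $$ (r, j)"
    using r j by (simp add: derivs_mat_def)
qed (auto simp: leibniz_mat_def derivs_mat_def)

lemma det_derivs_mat_scale_cols: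
  assumes "a < b" "x \<in> {a..b}" "\<forall>j<m. ndiff a b (s + m - 1) (K j)"
  shows "det (derivs_mat a b m s (\<lambda>j y. c j * K j y) x) = (\<Prod>j<m. c j) * det (derivs_mat a b m s K x)"
proof -
  have "derivs_mat a b m s K x * mat_diag m c = mat m m (\<lambda>(r, j). derivs_mat a b m s K x $$ (r, j) * c j)"
    by (rule mat_diag_mult_right) simp
  also have "\<dots> = derivs_mat a b m s (\<lambda>j y. c j * K j y) x"
    using assms ndiff_mono[of a b "s + m - 1"]
    by (auto simp: derivs_mat_def dn_cmult intro!: eq_matI)
  finally have "derivs_mat a b m s (\<lambda>j y. c j * K j y) x = derivs_mat a b m s K x * mat_diag m c" ..
  moreover have "det (mat_diag m c) = (\<Prod>j<m. c j)"
    by (subst det_lower_triangular[of m]) (auto simp: mat_diag_def prod_list_diag_prod atLeast0LessThan)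
  ultimately show ?thesis
    by (simp add: det_mult[of _ m] mult.commute)
qed

lemma det_derivs_mat_const_first_col:
  assumes "a < b" "x \<in> {a..b}" "0 < m" "\<forall>y\<in>{a..b}. F 0 y = 1"
  shows "det (derivs_mat a b m 0 F x) = det (derivs_mat a b (m - 1) 1 (\<lambda>j. F (Suc j)) x)"
proof -
  let ?B = "derivs_mat a b m 0 F x"
  have col0: "?B $$ (i, 0) = (if i = 0 then 1 else 0)" if "i < m" for i
    using that assms dn_cong[of a b "F 0" "\<lambda>y. 1"] dn_const[of a b x i 1]
    by (simp add: derivs_mat_def)
  have "det ?B = (\<Sum>i<m. ?B $$ (i, 0) * cofactor ?B i 0)"
    using assms(3) by (intro laplace_expansion_column) auto
  also have "\<dots> = (\<Sum>i<m. if i = 0 then cofactor ?B 0 0 else 0)"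
    using col0 by (intro sum.cong) auto
  also have "\<dots> = cofactor ?B 0 0"
    using assms(3) by simp
  also have "\<dots> = det (derivs_mat a b (m - 1) 1 (\<lambda>j. F (Suc j)) x)"
    unfolding cofactor_def by (auto simp: mat_delete_def derivs_mat_def intro!: arg_cong[where f = det] eq_matI)
  finally show ?thesis .
qed

lemma det_derivs_mat_step:
  assumes "a < b" "x \<in> {a..b}" "0 < m"
    and "ndiff a b m g"
    and "\<forall>j<m. \<forall>y\<in>{a..b}. dw a b (Z (Suc j)) y = g y * (real (Suc j) * Z' j y)"
    and "\<forall>y\<in>{a..b}. Z' 0 y = 1"
    and "\<forall>j<m. ndiff a b m (Z' j)"
    and "\<forall>y\<in>{a..b}. dw a b F y = g y * G y"
    and "ndiff a b m G"
  shows "det (derivs_mat a b (Suc m) 1 (with_last (Suc m) Z F) x) =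
    fact m * g x ^ Suc m * det (derivs_mat a b m 1 (with_last m Z' G) x)"
proof -
  define c where "c j = (if j < m then real (Suc j) else 1)" for j
  define K where "K j = (if j < m then Z' j else G)" for j
  have K: "\<forall>j<Suc m. ndiff a b m (K j)"
    using assms(7,9) by (simp add: K_def)
  have "derivs_mat a b (Suc m) 1 (with_last (Suc m) Z F) x =
      derivs_mat a b (Suc m) 0 (\<lambda>j y. g y * (c j * K j y)) x"
    unfolding One_nat_def derivs_mat_Suc using assms(2,5,8)
    by (intro derivs_mat_cong) (auto simp: with_last_def c_def K_def)
  also have "\<dots> = leibniz_mat a b (Suc m) g x * derivs_mat a b (Suc m) 0 (\<lambda>j y. c j * K j y) x"
    using assms(1,2,4) K by (intro derivs_mat_mult) (auto intro: ndiff_cmult)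
  finally have "det (derivs_mat a b (Suc m) 1 (with_last (Suc m) Z F) x) =
      g x ^ Suc m * det (derivs_mat a b (Suc m) 0 (\<lambda>j y. c j * K j y) x)"
    by (simp add: det_mult[of _ "Suc m"] det_leibniz_mat)
  also have "det (derivs_mat a b (Suc m) 0 (\<lambda>j y. c j * K j y) x) =
      fact m * det (derivs_mat a b (Suc m) 0 K x)"
    using det_derivs_mat_scale_cols[of a b x "Suc m" 0 K c] assms(1,2) K
    by (simp add: c_def fact_prod_Suc atLeast0LessThan of_nat_prod)
  also have "det (derivs_mat a b (Suc m) 0 K x) = det (derivs_mat a b m 1 (\<lambda>j. K (Suc j)) x)"
    using det_derivs_mat_const_first_col[of a b x "Suc m" K] assms(1-3,6) by (simp add: K_def)
  also have "(\<lambda>j. K (Suc j)) = with_last m Z' G"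
    by (auto simp: K_def with_last_def fun_eq_iff)
  finally show ?thesis by simp
qed

definition Phi_exponent :: "nat \<Rightarrow> nat" where
  "Phi_exponent m = (if even m then m div 2 + 1 else m div 2)"

lemma Phi_exponent_Suc: "Phi_exponent (Suc m) + Phi_exponent m = Suc m"
  by (auto simp: Phi_exponent_def elim!: evenE oddE)

lemma alpha_Suc: "alpha (Suc m) = fact (Suc m) * alpha m"
  by (simp add: alpha_def prod.atLeast0_atMost_Suc)

lemma alpha_pos: "0 < alpha m"
  by (simp add: alpha_def prod_pos)

lemma det_derivs_mat_Yp_PhiD:
  assumes "a < b" "x0 \<in> {a..b}" "x \<in> {a..b}" "1 \<le> m"
    and "\<forall>y\<in>{a..b}. \<Phi> y \<noteq> 0" "ndiff a b (k + m) \<Phi>" "ndiff a b (k + m) f"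
    and "\<forall>j<m. ndiff a b m (Yp \<Phi> j x0) \<and> ndiff a b m (Ypt \<Phi> j x0)"
  shows "det (derivs_mat a b m 1 (with_last m (\<lambda>j. Yp \<Phi> j x0) (PhiD a b \<Phi> k f)) x) =
      alpha (m - 1) * \<Phi> x ^ Phi_exponent m *
      dw a b (PhiD a b (if odd m then \<Phi> else (\<lambda>y. 1 / \<Phi> y)) (k + m - 1) f) x"
  using assms(4-8)
proof (induction m arbitrary: \<Phi> k rule: nat_induct_at_least)
  case base
  show ?case
    by (subst det_single) (auto simp: derivs_mat_def with_last_def alpha_def Phi_exponent_def dn_Suc)
next
  case (Suc m)
  have inv: "ndiff a b (Suc k + m) (\<lambda>y. 1 / \<Phi> y)"
    using Suc.prems assms(1) by (intro ndiff_inverse) auto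
  have \<Phi>: "continuous_on {a..b} \<Phi>" "ndiff a b m \<Phi>"
    using Suc.prems(2) ndiff_continuous_on[of a b "k + m"] ndiff_mono by auto
  have Y: "ndiff a b m (Yp \<Phi> j x0)" "ndiff a b m (Ypt \<Phi> j x0)" "continuous_on {a..b} (Ypt \<Phi> j x0)"
    if "j < Suc m" for j
    using Suc.prems(4) that ndiff_mono[of a b "Suc m"] ndiff_continuous_on by auto
  have step: "det (derivs_mat a b (Suc m) 1 (with_last (Suc m) (\<lambda>j. Yp \<Phi> j x0) (PhiD a b \<Phi> k f)) x) =
      fact m * \<Phi> x ^ Suc m *
      det (derivs_mat a b m 1 (with_last m (\<lambda>j. Ypt \<Phi> j x0) (PhiD a b (\<lambda>y. 1 / \<Phi> y) (Suc k) f)) x)"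
  proof (rule det_derivs_mat_step)
    show "\<forall>j<m. \<forall>y\<in>{a..b}. dw a b (Yp \<Phi> (Suc j) x0) y = \<Phi> y * (real (Suc j) * Ypt \<Phi> j x0 y)"
      using assms(1,2) \<Phi> Y by (intro allI impI ballI dw_Yp_Suc) auto
    show "\<forall>y\<in>{a..b}. dw a b (PhiD a b \<Phi> k f) y = \<Phi> y * PhiD a b (\<lambda>y. 1 / \<Phi> y) (Suc k) f y"
      using Suc.prems(1) by (simp add: PhiD_inverse)
    show "ndiff a b m (PhiD a b (\<lambda>y. 1 / \<Phi> y) (Suc k) f)"
      using assms(1) Suc.prems inv by (intro ndiff_PhiD) auto
  qed (use assms Suc.hyps Y \<Phi> in auto)
  have IH: "det (derivs_mat a b m 1 (with_last m (\<lambda>j. Ypt \<Phi> j x0) (PhiD a b (\<lambda>y. 1 / \<Phi> y) (Suc k) f)) x) =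
      alpha (m - 1) * (1 / \<Phi> x) ^ Phi_exponent m *
      dw a b (PhiD a b (if odd m then (\<lambda>y. 1 / \<Phi> y) else \<Phi>) (k + Suc m - 1) f) x"
    using Suc.IH[of "\<lambda>y. 1 / \<Phi> y" "Suc k"] Suc.prems inv Y
    by (simp add: Yp_inverse Ypt_inverse)
  have factor: "fact m * \<Phi> x ^ Suc m * alpha (m - 1) * (1 / \<Phi> x) ^ Phi_exponent m =
      alpha (Suc m - 1) * \<Phi> x ^ Phi_exponent (Suc m)"
  proof -
    have "\<Phi> x ^ Suc m = \<Phi> x ^ Phi_exponent (Suc m) * \<Phi> x ^ Phi_exponent m"
      unfolding power_add[symmetric] Phi_exponent_Suc ..
    then have pow: "\<Phi> x ^ Suc m * (1 / \<Phi> x) ^ Phi_exponent m = \<Phi> x ^ Phi_exponent (Suc m)"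
      using Suc.prems(1) assms(3) by (simp add: power_one_over)
    have "fact m * \<Phi> x ^ Suc m * alpha (m - 1) * (1 / \<Phi> x) ^ Phi_exponent m =
        fact m * alpha (m - 1) * (\<Phi> x ^ Suc m * (1 / \<Phi> x) ^ Phi_exponent m)"
      by (simp only: ac_simps)
    also have "\<dots> = alpha (Suc m - 1) * \<Phi> x ^ Phi_exponent (Suc m)"
      using alpha_Suc[of "m - 1"] Suc.hyps unfolding pow by simp
    finally show ?thesis .
  qed
  show ?case
    unfolding step IH mult.assoc[symmetric] factor by simp
qed

lemma det_derivs_mat_with_last_expansion:
  assumes "1 \<le> n"
  shows "det (derivs_mat a b n 1 (with_last n Z F) x) =
    (\<Sum>k=1..n. (-1) ^ (n - k) *
      det (mat (n - 1) (n - 1) (\<lambda>(r, j). dn a b (idx n k (r + 1)) (Z (j + 1)) x)) * dn a b k F x)"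
proof -
  let ?W = "derivs_mat a b n 1 (with_last n Z F) x"
  let ?M = "\<lambda>k. mat (n - 1) (n - 1) (\<lambda>(r, j). dn a b (idx n k (r + 1)) (Z (j + 1)) x)"
  have "det ?W = (\<Sum>i<n. ?W $$ (i, n - 1) * cofactor ?W i (n - 1))"
    using assms by (intro laplace_expansion_column) auto
  also have "\<dots> = (\<Sum>i<n. (-1) ^ (n - Suc i) * det (?M (Suc i)) * dn a b (Suc i) F x)"
  proof (rule sum.cong)
    fix i assume i: "i \<in> {..<n}"
    have "mat_delete ?W i (n - 1) = ?M (Suc i)"
      using i idx_Suc[of "Suc i" n]
      by (auto simp: mat_delete_def derivs_mat_def with_last_def insert_index_def intro!: eq_matI)
    moreover have "(-1::real) ^ (i + (n - 1)) = (-1) ^ (n - Suc i)"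
    proof -
      have "i + (n - 1) = 2 * i + (n - Suc i)" using i by auto
      then show ?thesis by (simp add: power_add power_mult)
    qed
    ultimately show "?W $$ (i, n - 1) * cofactor ?W i (n - 1) =
        (-1) ^ (n - Suc i) * det (?M (Suc i)) * dn a b (Suc i) F x"
      using i by (simp add: cofactor_def derivs_mat_def with_last_def)
  qed simp
  also have "\<dots> = (\<Sum>k=1..n. (-1) ^ (n - k) * det (?M k) * dn a b k F x)"
    by (simp only: One_nat_def sum.atLeast1_atMost_eq)
  finally show ?thesis .
qed

lemma sum_acoef_eq_det:
  assumes "1 \<le> n"
  shows "(\<Sum>k=1..n. acoef a b \<Phi> n k x0 x * dn a b k f x) =
    (if odd n then \<Phi> x ^ ((n + 1) div 2) / alpha (n - 1) * det (derivs_mat a b n 1 (with_last n (\<lambda>j. Ypt \<Phi> j x0) f) x)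
     else det (derivs_mat a b n 1 (with_last n (\<lambda>j. Yp \<Phi> j x0) f) x) / (alpha (n - 1) * \<Phi> x ^ (n div 2)))"
  unfolding det_derivs_mat_with_last_expansion[OF assms] sum_distrib_left sum_divide_distrib
  by (auto simp: acoef_def Mmat_def Mtmat_def eps_eq intro!: sum.cong)

lemma PhiD_eq_sum_acoef:
  assumes "a < b" "\<forall>x\<in>{a..b}. \<Phi> x \<noteq> 0" "x0 \<in> {a..b}" "x \<in> {a..b}" "1 \<le> n"
    and "ndiff a b n \<Phi>" "ndiff a b n f" "\<forall>j<n. ndiff a b n (Yp \<Phi> j x0) \<and> ndiff a b n (Ypt \<Phi> j x0)"
  shows "PhiD a b \<Phi> n f x = (\<Sum>k=1..n. acoef a b \<Phi> n k x0 x * dn a b k f x)"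
proof -
  have PhiD: "PhiD a b \<Phi> n f x = \<Phi> x * dw a b (PhiD a b (\<lambda>y. 1 / \<Phi> y) (n - 1) f) x"
    using PhiD_Suc_inverse[of a b \<Phi> "n - 1" f] assms(5) by simp
  have nz: "\<Phi> x \<noteq> 0" "alpha (n - 1) \<noteq> 0"
    using assms(2,4) alpha_pos[of "n - 1"] by auto
  show ?thesis
  proof (cases "odd n")
    case True
    have "det (derivs_mat a b n 1 (with_last n (\<lambda>j. Ypt \<Phi> j x0) f) x) =
        alpha (n - 1) * (1 / \<Phi> x) ^ (n div 2) * dw a b (PhiD a b (\<lambda>y. 1 / \<Phi> y) (n - 1) f) x"
      using det_derivs_mat_Yp_PhiD[of a b x0 x n "\<lambda>y. 1 / \<Phi> y" 0 f] assms True ndiff_inverse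
      by (simp add: Yp_inverse Ypt_inverse Phi_exponent_def)
    moreover have "(n + 1) div 2 = Suc (n div 2)"
      using True by presburger
    ultimately show ?thesis
      unfolding PhiD sum_acoef_eq_det[OF assms(5)] using True nz by (simp add: power_one_over field_simps)
  next
    case False
    have "det (derivs_mat a b n 1 (with_last n (\<lambda>j. Yp \<Phi> j x0) f) x) =
        alpha (n - 1) * \<Phi> x ^ (n div 2 + 1) * dw a b (PhiD a b (\<lambda>y. 1 / \<Phi> y) (n - 1) f) x"
      using det_derivs_mat_Yp_PhiD[of a b x0 x n \<Phi> 0 f] assms False
      by (simp add: Phi_exponent_def)
    then show ?thesis
      unfolding PhiD sum_acoef_eq_det[OF assms(5)] using False nz by (simp add: field_simps)
  qed
qed

lemma acoef_inverse: "acoef a b (\<lambda>y. 1 / \<Phi> y) n k x0 x = atcoef a b \<Phi> n k x0 x"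
  by (simp add: acoef_def atcoef_def Mmat_def Mtmat_def Yp_inverse Ypt_inverse power_one_over)

theorem proposition4:
  fixes \<Phi> f :: "real \<Rightarrow> real" and a b x0 :: real and n :: nat
  assumes "a < b"
    and "\<forall>x\<in>{a..b}. \<Phi> x \<noteq> 0"
    and "x0 \<in> {a..b}"
    and "n \<ge> 1"
    and "ndiff a b n \<Phi>" and "ndiff a b n f"
    and "\<forall>j<n. ndiff a b n (Yp \<Phi> j x0) \<and> ndiff a b n (Ypt \<Phi> j x0)"
  shows "\<forall>x\<in>{a..b}.
           PhiD a b \<Phi> n f x = (\<Sum>k=1..n. acoef a b \<Phi> n k x0 x * dn a b k f x) \<and>
           PhiDt a b \<Phi> n f x = (\<Sum>k=1..n. atcoef a b \<Phi> n k x0 x * dn a b k f x)"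
proof (intro ballI conjI)
  fix x assume x: "x \<in> {a..b}"
  show "PhiD a b \<Phi> n f x = (\<Sum>k=1..n. acoef a b \<Phi> n k x0 x * dn a b k f x)"
    using assms x by (intro PhiD_eq_sum_acoef)
  have "PhiD a b (\<lambda>y. 1 / \<Phi> y) n f x = (\<Sum>k=1..n. acoef a b (\<lambda>y. 1 / \<Phi> y) n k x0 x * dn a b k f x)"
    using assms x ndiff_inverse by (intro PhiD_eq_sum_acoef) (auto simp: Yp_inverse Ypt_inverse)
  then show "PhiDt a b \<Phi> n f x = (\<Sum>k=1..n. atcoef a b \<Phi> n k x0 x * dn a b k f x)"
    by (simp add: PhiD_inverse acoef_inverse)
qed

end
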